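(* Let $(M,d)$ be a complete pointed metric space and $f\in\mathrm{Lip}_0(M,M)$ such that $\mathrm{int}(R_{\widehat f})\neq\emptyset$, and assume there is $C>0$ with $\mathrm{Lip}(f^n)\le C$ for all $n\in\mathbb N$. Then $R_{\widehat f}=\mathcal F(M)$. Moreover, if $M$ is separable, then $\widehat f$ is a rigid operator.
   Context: A pointed metric space is a metric space with a distinguished point $0$. $\mathrm{Lip}_0(M,M)$ denotes the Lipschitz maps $f:M\to M$ with $f(0)=0$, $\mathrm{Lip}(f)$ the least Lipschitz constant; $\mathrm{Lip}_0(M)$ the real-valued Lipschitz functions vanishing at $0$ normed by $\mathrm{Lip}$. $\delta:M\to\mathrm{Lip}_0(M)^*$, $\delta(x)(\varphi)=\varphi(x)$; $\mathcal F(M)$ is the norm-closed linear span of $\delta(M)$. $\widehat f$ is the unique bounded linear operator on $\mathcal F(M)$ with $\widehat f(\delta(x))=\delta(f(x))$. For an operator $T$, $R_T=\{\mu:\liminf_{n}\|T^n\mu-\mu\|=0\}$. A bounded linear operator $T$ on a Banach space $X$ is rigid if there is an increasing sequence $(n(j))_j\subset\mathbb N$ with $T^{n(j)}x\to x$ for every $x\in X$. *)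

theory Defs
  imports "HOL-Analysis.Analysis"
begin

definition Lip :: "('a::metric_space \<Rightarrow> 'b::metric_space) \<Rightarrow> real" where
  "Lip f = Inf {C. C-lipschitz_on UNIV f}"

definition Lip0 :: "'a::metric_space \<Rightarrow> ('a \<Rightarrow> real) set" where
  "Lip0 z = {\<phi>. \<phi> z = 0 \<and> (\<exists>C. C-lipschitz_on UNIV \<phi>)}"

definition LipMaps0 :: "'a::metric_space \<Rightarrow> ('a \<Rightarrow> 'a) set" where
  "LipMaps0 z = {f. f z = z \<and> (\<exists>C. C-lipschitz_on UNIV f)}"

text \<open>The dual Lip_0(M)^*: functionals on Lip_0(M) which are linear and bounded.
  They are represented as functions on all of 'a => real which vanish outside Lip_0(M).\<close>
definition LipDual :: "'a::metric_space \<Rightarrow> (('a \<Rightarrow> real) \<Rightarrow> real) set" where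
  "LipDual z = {\<mu>. (\<forall>\<phi>. \<phi> \<notin> Lip0 z \<longrightarrow> \<mu> \<phi> = 0)
      \<and> (\<forall>\<phi>\<in>Lip0 z. \<forall>\<psi>\<in>Lip0 z. \<forall>a b. \<mu> (\<lambda>x. a * \<phi> x + b * \<psi> x) = a * \<mu> \<phi> + b * \<mu> \<psi>)
      \<and> (\<exists>K. \<forall>\<phi>\<in>Lip0 z. \<bar>\<mu> \<phi>\<bar> \<le> K * Lip \<phi>)}"

definition dnorm :: "'a::metric_space \<Rightarrow> (('a \<Rightarrow> real) \<Rightarrow> real) \<Rightarrow> real" where
  "dnorm z \<mu> = Sup {\<bar>\<mu> \<phi>\<bar> | \<phi>. \<phi> \<in> Lip0 z \<and> Lip \<phi> \<le> 1}"

definition delta :: "'a::metric_space \<Rightarrow> 'a \<Rightarrow> (('a \<Rightarrow> real) \<Rightarrow> real)" where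
  "delta z x = (\<lambda>\<phi>. if \<phi> \<in> Lip0 z then \<phi> x else 0)"

definition delta_span :: "'a::metric_space \<Rightarrow> (('a \<Rightarrow> real) \<Rightarrow> real) set" where
  "delta_span z = {(\<lambda>\<phi>. \<Sum>x\<in>A. c x * delta z x \<phi>) | A c. finite A}"

definition FreeSp :: "'a::metric_space \<Rightarrow> (('a \<Rightarrow> real) \<Rightarrow> real) set" where
  "FreeSp z = {\<mu> \<in> LipDual z. \<forall>e>0. \<exists>\<nu>\<in>delta_span z. dnorm z (\<mu> - \<nu>) < e}"

definition bounded_op_F :: "'a::metric_space \<Rightarrow>
    ((('a \<Rightarrow> real) \<Rightarrow> real) \<Rightarrow> (('a \<Rightarrow> real) \<Rightarrow> real)) \<Rightarrow> bool" where
  "bounded_op_F z T \<longleftrightarrow> (\<forall>\<mu>\<in>FreeSp z. T \<mu> \<in> FreeSp z)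
     \<and> (\<forall>\<mu>\<in>FreeSp z. \<forall>\<nu>\<in>FreeSp z. \<forall>a b.
          T (\<lambda>\<phi>. a * \<mu> \<phi> + b * \<nu> \<phi>) = (\<lambda>\<phi>. a * T \<mu> \<phi> + b * T \<nu> \<phi>))
     \<and> (\<exists>K. \<forall>\<mu>\<in>FreeSp z. dnorm z (T \<mu>) \<le> K * dnorm z \<mu>)
     \<and> (\<forall>\<mu>. \<mu> \<notin> FreeSp z \<longrightarrow> T \<mu> = (\<lambda>_. 0))"

definition fhat :: "'a::metric_space \<Rightarrow> ('a \<Rightarrow> 'a) \<Rightarrow>
    (('a \<Rightarrow> real) \<Rightarrow> real) \<Rightarrow> (('a \<Rightarrow> real) \<Rightarrow> real)" where
  "fhat z f = (THE T. bounded_op_F z T \<and> (\<forall>x. T (delta z x) = delta z (f x)))"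

definition RT :: "'a::metric_space \<Rightarrow>
    ((('a \<Rightarrow> real) \<Rightarrow> real) \<Rightarrow> (('a \<Rightarrow> real) \<Rightarrow> real)) \<Rightarrow> (('a \<Rightarrow> real) \<Rightarrow> real) set" where
  "RT z T = {\<mu> \<in> FreeSp z. liminf (\<lambda>n. ereal (dnorm z ((T ^^ n) \<mu> - \<mu>))) = 0}"

definition F_interior :: "'a::metric_space \<Rightarrow> (('a \<Rightarrow> real) \<Rightarrow> real) set \<Rightarrow> (('a \<Rightarrow> real) \<Rightarrow> real) set" where
  "F_interior z S = {\<mu> \<in> FreeSp z. \<exists>e>0. \<forall>\<nu>\<in>FreeSp z. dnorm z (\<nu> - \<mu>) < e \<longrightarrow> \<nu> \<in> S}"

definition rigid_F :: "'a::metric_space \<Rightarrow>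
    ((('a \<Rightarrow> real) \<Rightarrow> real) \<Rightarrow> (('a \<Rightarrow> real) \<Rightarrow> real)) \<Rightarrow> bool" where
  "rigid_F z T \<longleftrightarrow> (\<exists>r::nat \<Rightarrow> nat. strict_mono r \<and>
     (\<forall>\<mu>\<in>FreeSp z. (\<lambda>j. dnorm z ((T ^^ r j) \<mu> - \<mu>)) \<longlonglongrightarrow> 0))"

end

theory Submission
  imports Defs
begin

text \<open>If \<open>R\<close> of \<open>fhat z f\<close> has an interior point, it contains a finitely supported
  \<open>\<nu> = \<Sum>a\<in>S. c a * delta z a\<close> whose coefficients are sign-generic: no nontrivial sum of the
  \<open>c a\<close> with signs in \<open>{-1, 0, 1}\<close> vanishes. Testing \<open>fhat^n \<nu> - \<nu>\<close> against a tent function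
  around a support point \<open>x\<close>, at a radius where (by pigeonhole over geometric scales) no image
  \<open>f^n a\<close> lies in the boundary shell, produces a nontrivial signed sum of coefficients unless
  \<open>f^n x\<close> is close to \<open>x\<close>. So recurrence of \<open>\<nu>\<close> makes \<open>f\<close> simultaneously recurrent on finite
  sets. Since the \<open>f^n\<close> are uniformly Lipschitz, approximating an arbitrary \<open>\<mu>\<close> by finitely
  supported elements transfers this to every \<open>\<mu>\<close>; for separable \<open>M\<close> a diagonal sequence that
  works on a countable dense set gives \<open>f^(n j) \<longrightarrow> id\<close> pointwise, hence rigidity.\<close>

lemma Lip_le:
  assumes "C-lipschitz_on UNIV g"
  shows "Lip g \<le> C"
  unfolding Lip_def
  by (rule cInf_lower) (use assms lipschitz_on_nonneg in \<open>auto intro!: bdd_belowI[where m=0]\<close>)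

lemma lipschitz_on_Lip:
  assumes "C-lipschitz_on UNIV g"
  shows "(Lip g)-lipschitz_on UNIV g"
proof (rule lipschitz_onI)
  have ne: "{C. C-lipschitz_on UNIV g} \<noteq> {}" using assms by auto
  show "0 \<le> Lip g" unfolding Lip_def
    by (rule cInf_greatest[OF ne]) (auto dest: lipschitz_on_nonneg)
  fix x y :: 'a
  show "dist (g x) (g y) \<le> Lip g * dist x y"
  proof (cases "x = y")
    case False
    then have d: "dist x y > 0" by simp
    have "dist (g x) (g y) / dist x y \<le> Lip g" unfolding Lip_def
    proof (rule cInf_greatest[OF ne])
      fix C assume "C \<in> {C. C-lipschitz_on UNIV g}"
      then have "dist (g x) (g y) \<le> C * dist x y" by (auto dest: lipschitz_onD)
      then show "dist (g x) (g y) / dist x y \<le> C" using d by (simp add: divide_le_eq)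
    qed
    then show ?thesis using d by (simp add: divide_le_eq mult.commute)
  qed simp
qed

lemma Lip0_lipschitz: "\<phi> \<in> Lip0 z \<Longrightarrow> (Lip \<phi>)-lipschitz_on UNIV \<phi>"
  unfolding Lip0_def using lipschitz_on_Lip by blast

lemma Lip0_Lip_nonneg: "\<phi> \<in> Lip0 z \<Longrightarrow> 0 \<le> Lip \<phi>"
  using Lip0_lipschitz lipschitz_on_nonneg by blast

lemma Lip0_dist: "\<phi> \<in> Lip0 z \<Longrightarrow> \<bar>\<phi> x - \<phi> y\<bar> \<le> Lip \<phi> * dist x y"
  using lipschitz_onD[OF Lip0_lipschitz] by (fastforce simp: dist_real_def)

lemma Lip0_abs_le: "\<phi> \<in> Lip0 z \<Longrightarrow> \<bar>\<phi> x\<bar> \<le> Lip \<phi> * dist x z"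
  using Lip0_dist[of \<phi> z x z] by (simp add: Lip0_def)

lemma lipschitz_on_zero: "0-lipschitz_on UNIV (\<lambda>_::'a::metric_space. 0::real)"
  by (auto intro: lipschitz_onI)

lemma zero_in_Lip0: "(\<lambda>_. 0) \<in> Lip0 z"
  unfolding Lip0_def using lipschitz_on_zero by blast

lemma Lip_zero_le: "Lip (\<lambda>_::'a::metric_space. 0::real) \<le> 1"
  by (rule order_trans[OF Lip_le[OF lipschitz_on_zero]]) simp

lemma Lip0_lincomb:
  assumes "\<phi> \<in> Lip0 z" "\<psi> \<in> Lip0 z"
  shows "(\<lambda>x. a * \<phi> x + b * \<psi> x) \<in> Lip0 z"
proof -
  have "(\<bar>a\<bar> * Lip \<phi> + \<bar>b\<bar> * Lip \<psi>)-lipschitz_on UNIV (\<lambda>x. a * \<phi> x + b * \<psi> x)"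
  proof (rule lipschitz_onI)
    fix x y
    have "\<bar>(a * \<phi> x + b * \<psi> x) - (a * \<phi> y + b * \<psi> y)\<bar> = \<bar>a * (\<phi> x - \<phi> y) + b * (\<psi> x - \<psi> y)\<bar>"
      by (simp add: algebra_simps)
    also have "\<dots> \<le> \<bar>a\<bar> * \<bar>\<phi> x - \<phi> y\<bar> + \<bar>b\<bar> * \<bar>\<psi> x - \<psi> y\<bar>"
      by (metis abs_mult abs_triangle_ineq)
    also have "\<dots> \<le> \<bar>a\<bar> * (Lip \<phi> * dist x y) + \<bar>b\<bar> * (Lip \<psi> * dist x y)"
      using assms by (intro add_mono mult_left_mono Lip0_dist) auto
    finally show "dist (a * \<phi> x + b * \<psi> x) (a * \<phi> y + b * \<psi> y)
        \<le> (\<bar>a\<bar> * Lip \<phi> + \<bar>b\<bar> * Lip \<psi>) * dist x y"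
      by (simp add: dist_real_def algebra_simps)
    show "0 \<le> \<bar>a\<bar> * Lip \<phi> + \<bar>b\<bar> * Lip \<psi>"
      using Lip0_Lip_nonneg[OF assms(1)] Lip0_Lip_nonneg[OF assms(2)] by simp
  qed
  then show ?thesis using assms unfolding Lip0_def by auto
qed

lemma Lip0_comp:
  assumes "\<phi> \<in> Lip0 z" "K-lipschitz_on UNIV g" "g z = z"
  shows "\<phi> \<circ> g \<in> Lip0 z" and "Lip (\<phi> \<circ> g) \<le> Lip \<phi> * K"
proof -
  have "(Lip \<phi> * K)-lipschitz_on UNIV (\<phi> \<circ> g)"
    by (rule lipschitz_on_compose[OF assms(2) lipschitz_on_subset[OF Lip0_lipschitz[OF assms(1)]]])
      auto
  then show "Lip (\<phi> \<circ> g) \<le> Lip \<phi> * K" by (rule Lip_le)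
  show "\<phi> \<circ> g \<in> Lip0 z"
    using \<open>(Lip \<phi> * K)-lipschitz_on UNIV (\<phi> \<circ> g)\<close> assms unfolding Lip0_def by auto
qed

lemma tent_lipschitz: "1-lipschitz_on UNIV (\<lambda>y. max 0 (s - dist y x))"
proof (rule lipschitz_onI)
  fix y y'
  have "\<bar>dist y x - dist y' x\<bar> \<le> dist y y'"
    using abs_dist_diff_le[of y x y'] by (simp add: dist_commute)
  then show "dist (max 0 (s - dist y x)) (max 0 (s - dist y' x)) \<le> 1 * dist y y'"
    by (simp add: dist_real_def max_def abs_if split: if_splits; linarith)
qed simp

lemma tent_Lip0:
  assumes "s \<le> dist z x"
  shows "(\<lambda>y. max 0 (s - dist y x)) \<in> Lip0 z" and "Lip (\<lambda>y. max 0 (s - dist y x)) \<le> 1"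
  using assms tent_lipschitz[of s x] Lip_le unfolding Lip0_def by auto

lemma funpow_lipschitz:
  assumes "K-lipschitz_on UNIV f" "f z = z"
  shows "(K ^ n)-lipschitz_on UNIV (f ^^ n)" and "(f ^^ n) z = z"
proof -
  show "(f ^^ n) z = z" by (induction n) (simp_all add: assms(2))
  show "(K ^ n)-lipschitz_on UNIV (f ^^ n)"
  proof (induction n)
    case (Suc n)
    have "(K * K ^ n)-lipschitz_on UNIV (f \<circ> f ^^ n)"
      by (rule lipschitz_on_compose[OF Suc lipschitz_on_subset[OF assms(1)]]) auto
    then show ?case by simp
  qed (auto intro: lipschitz_onI)
qed

lemma LipDual_out: "\<mu> \<in> LipDual z \<Longrightarrow> \<phi> \<notin> Lip0 z \<Longrightarrow> \<mu> \<phi> = 0"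
  unfolding LipDual_def by auto

lemma LipDual_lincomb_apply:
  "\<mu> \<in> LipDual z \<Longrightarrow> \<phi> \<in> Lip0 z \<Longrightarrow> \<psi> \<in> Lip0 z \<Longrightarrow>
   \<mu> (\<lambda>x. a * \<phi> x + b * \<psi> x) = a * \<mu> \<phi> + b * \<mu> \<psi>"
  unfolding LipDual_def by blast

lemma LipDual_apply_zero: "\<mu> \<in> LipDual z \<Longrightarrow> \<mu> (\<lambda>_. 0) = 0"
  using LipDual_lincomb_apply[OF _ zero_in_Lip0 zero_in_Lip0, of \<mu> z 0 0] by simp

lemma LipDual_zero: "(\<lambda>_. 0) \<in> LipDual z"
  unfolding LipDual_def by (auto intro!: exI[of _ 0])

lemma dnorm_set_bdd:
  assumes "\<mu> \<in> LipDual z"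
  shows "bdd_above {\<bar>\<mu> \<phi>\<bar> | \<phi>. \<phi> \<in> Lip0 z \<and> Lip \<phi> \<le> 1}"
proof -
  obtain K where K: "\<forall>\<phi>\<in>Lip0 z. \<bar>\<mu> \<phi>\<bar> \<le> K * Lip \<phi>"
    using assms unfolding LipDual_def by blast
  have "\<bar>\<mu> \<phi>\<bar> \<le> max K 0" if "\<phi> \<in> Lip0 z" "Lip \<phi> \<le> 1" for \<phi>
  proof -
    have "\<bar>\<mu> \<phi>\<bar> \<le> max K 0 * Lip \<phi>"
      using K that Lip0_Lip_nonneg[OF that(1)] by (meson max.cobounded1 mult_right_mono order_trans)
    also have "\<dots> \<le> max K 0" using that Lip0_Lip_nonneg[OF that(1)] by (simp add: mult_left_le)
    finally show ?thesis .
  qed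
  then show ?thesis by (auto intro!: bdd_aboveI[where M="max K 0"])
qed

lemma dnorm_upper:
  "\<mu> \<in> LipDual z \<Longrightarrow> \<phi> \<in> Lip0 z \<Longrightarrow> Lip \<phi> \<le> 1 \<Longrightarrow> \<bar>\<mu> \<phi>\<bar> \<le> dnorm z \<mu>"
  unfolding dnorm_def by (rule cSup_upper) (auto intro: dnorm_set_bdd)

lemma dnorm_nonneg: "\<mu> \<in> LipDual z \<Longrightarrow> 0 \<le> dnorm z \<mu>"
  using dnorm_upper[OF _ zero_in_Lip0 Lip_zero_le] by (meson abs_ge_zero order_trans)

lemma dnorm_le:
  assumes "\<mu> \<in> LipDual z" "\<And>\<phi>. \<phi> \<in> Lip0 z \<Longrightarrow> \<bar>\<mu> \<phi>\<bar> \<le> B * Lip \<phi>" "0 \<le> B"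
  shows "dnorm z \<mu> \<le> B"
  unfolding dnorm_def
proof (rule cSup_least)
  show "{\<bar>\<mu> \<phi>\<bar> | \<phi>. \<phi> \<in> Lip0 z \<and> Lip \<phi> \<le> 1} \<noteq> {}"
    using zero_in_Lip0 Lip_zero_le by blast
  fix r assume "r \<in> {\<bar>\<mu> \<phi>\<bar> | \<phi>. \<phi> \<in> Lip0 z \<and> Lip \<phi> \<le> 1}"
  then obtain \<phi> where \<phi>: "r = \<bar>\<mu> \<phi>\<bar>" "\<phi> \<in> Lip0 z" "Lip \<phi> \<le> 1" by blast
  then have "r \<le> B * Lip \<phi>" using assms(2) by simp
  also have "\<dots> \<le> B" using \<phi> assms(3) by (simp add: mult_left_le)
  finally show "r \<le> B" .
qed

lemma LipDual_abs_le:
  assumes "\<mu> \<in> LipDual z" "\<phi> \<in> Lip0 z"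
  shows "\<bar>\<mu> \<phi>\<bar> \<le> dnorm z \<mu> * Lip \<phi>"
proof (cases "Lip \<phi> = 0")
  case True
  then have "\<phi> = (\<lambda>_. 0)" using Lip0_abs_le[OF assms(2)] by fastforce
  then show ?thesis using LipDual_apply_zero[OF assms(1)] True by simp
next
  case False
  define L where "L = Lip \<phi>"
  have L: "L > 0" using False Lip0_Lip_nonneg[OF assms(2)] L_def by auto
  define \<psi> where "\<psi> = (\<lambda>x. (1/L) * \<phi> x + 0 * \<phi> x)"
  have \<psi>: "\<psi> \<in> Lip0 z" unfolding \<psi>_def by (rule Lip0_lincomb[OF assms(2) assms(2)])
  have "1-lipschitz_on UNIV \<psi>"
  proof (rule lipschitz_onI)
    fix x y
    have "dist (\<psi> x) (\<psi> y) = (1/L) * \<bar>\<phi> x - \<phi> y\<bar>"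
      using L by (simp add: \<psi>_def dist_real_def abs_divide flip: diff_divide_distrib)
    also have "\<dots> \<le> (1/L) * (L * dist x y)"
      using L Lip0_dist[OF assms(2)] L_def by (intro mult_left_mono) auto
    finally show "dist (\<psi> x) (\<psi> y) \<le> 1 * dist x y" using L by simp
  qed simp
  then have "\<bar>\<mu> \<psi>\<bar> \<le> dnorm z \<mu>" using dnorm_upper[OF assms(1) \<psi>] Lip_le by blast
  moreover have "\<mu> \<psi> = (1/L) * \<mu> \<phi> + 0 * \<mu> \<phi>"
    unfolding \<psi>_def by (rule LipDual_lincomb_apply[OF assms(1) assms(2) assms(2)])
  ultimately show ?thesis using L L_def by (simp add: abs_mult field_simps)
qed

lemma LipDual_lincomb:
  assumes "\<mu> \<in> LipDual z" "\<nu> \<in> LipDual z"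
  shows "(\<lambda>\<phi>. a * \<mu> \<phi> + b * \<nu> \<phi>) \<in> LipDual z"
    and "dnorm z (\<lambda>\<phi>. a * \<mu> \<phi> + b * \<nu> \<phi>) \<le> \<bar>a\<bar> * dnorm z \<mu> + \<bar>b\<bar> * dnorm z \<nu>"
proof -
  have bound: "\<bar>a * \<mu> \<phi> + b * \<nu> \<phi>\<bar> \<le> (\<bar>a\<bar> * dnorm z \<mu> + \<bar>b\<bar> * dnorm z \<nu>) * Lip \<phi>"
    if p: "\<phi> \<in> Lip0 z" for \<phi>
  proof -
    have "\<bar>a * \<mu> \<phi> + b * \<nu> \<phi>\<bar> \<le> \<bar>a\<bar> * \<bar>\<mu> \<phi>\<bar> + \<bar>b\<bar> * \<bar>\<nu> \<phi>\<bar>"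
      by (metis abs_mult abs_triangle_ineq)
    also have "\<dots> \<le> \<bar>a\<bar> * (dnorm z \<mu> * Lip \<phi>) + \<bar>b\<bar> * (dnorm z \<nu> * Lip \<phi>)"
      using assms p by (intro add_mono mult_left_mono LipDual_abs_le) auto
    finally show ?thesis by (simp add: algebra_simps)
  qed
  show L: "(\<lambda>\<phi>. a * \<mu> \<phi> + b * \<nu> \<phi>) \<in> LipDual z"
    unfolding LipDual_def
  proof (intro CollectI conjI allI ballI impI)
    fix \<phi> assume "\<phi> \<notin> Lip0 z"
    then show "a * \<mu> \<phi> + b * \<nu> \<phi> = 0"
      by (simp add: LipDual_out[OF assms(1)] LipDual_out[OF assms(2)])
  next
    fix \<phi> \<psi> p q assume "\<phi> \<in> Lip0 z" "\<psi> \<in> Lip0 z"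
    then show "a * \<mu> (\<lambda>x. p * \<phi> x + q * \<psi> x) + b * \<nu> (\<lambda>x. p * \<phi> x + q * \<psi> x) =
               p * (a * \<mu> \<phi> + b * \<nu> \<phi>) + q * (a * \<mu> \<psi> + b * \<nu> \<psi>)"
      using LipDual_lincomb_apply[OF assms(1)] LipDual_lincomb_apply[OF assms(2)]
      by (simp add: algebra_simps)
  qed (use bound in blast)
  show "dnorm z (\<lambda>\<phi>. a * \<mu> \<phi> + b * \<nu> \<phi>) \<le> \<bar>a\<bar> * dnorm z \<mu> + \<bar>b\<bar> * dnorm z \<nu>"
    using dnorm_nonneg[OF assms(1)] dnorm_nonneg[OF assms(2)] by (intro dnorm_le[OF L bound]) auto
qed

lemma LipDual_diff:
  assumes "\<mu> \<in> LipDual z" "\<nu> \<in> LipDual z"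
  shows "\<mu> - \<nu> \<in> LipDual z" and "dnorm z (\<mu> - \<nu>) \<le> dnorm z \<mu> + dnorm z \<nu>"
  using LipDual_lincomb[OF assms, of 1 "-1"] by (simp_all add: fun_diff_def)

lemma dnorm_le_0_imp_zero:
  assumes "\<mu> \<in> LipDual z" "dnorm z \<mu> \<le> 0"
  shows "\<mu> = (\<lambda>_. 0)"
proof
  fix \<phi> show "\<mu> \<phi> = 0"
  proof (cases "\<phi> \<in> Lip0 z")
    case True
    have "\<bar>\<mu> \<phi>\<bar> \<le> dnorm z \<mu> * Lip \<phi>" by (rule LipDual_abs_le[OF assms(1) True])
    also have "\<dots> \<le> 0" using assms(2) Lip0_Lip_nonneg[OF True] by (simp add: mult_nonpos_nonneg)
    finally show ?thesis by simp
  qed (use assms LipDual_out in auto)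
qed

lemma mult_divide_plus_one_less: "0 \<le> s \<Longrightarrow> 0 < e \<Longrightarrow> s * (e / (s + 1)) < (e::real)"
  by (simp add: divide_less_eq algebra_simps)

definition delta_comb :: "'a::metric_space \<Rightarrow> 'b set \<Rightarrow> ('b \<Rightarrow> real) \<Rightarrow> ('b \<Rightarrow> 'a) \<Rightarrow>
    (('a \<Rightarrow> real) \<Rightarrow> real)" where
  "delta_comb z A c h = (\<lambda>\<phi>. \<Sum>i\<in>A. c i * delta z (h i) \<phi>)"

lemma delta_comb_apply: "\<phi> \<in> Lip0 z \<Longrightarrow> delta_comb z A c h \<phi> = (\<Sum>i\<in>A. c i * \<phi> (h i))"
  by (simp add: delta_comb_def delta_def)

lemma delta_comb_out: "\<phi> \<notin> Lip0 z \<Longrightarrow> delta_comb z A c h \<phi> = 0"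
  by (simp add: delta_comb_def delta_def)

lemma delta_eq_delta_comb: "delta z x = delta_comb z {x} (\<lambda>_. 1) id"
  by (simp add: delta_comb_def)

lemma delta_comb_in_span:
  assumes "finite A"
  shows "delta_comb z A c h \<in> delta_span z"
proof -
  define c' where "c' y = (\<Sum>i\<in>{i. i \<in> A \<and> h i = y}. c i)" for y
  have "delta_comb z A c h \<phi> = (\<Sum>y\<in>h ` A. c' y * delta z y \<phi>)" for \<phi>
  proof -
    have "delta_comb z A c h \<phi> = (\<Sum>y\<in>h ` A. \<Sum>i\<in>{i. i \<in> A \<and> h i = y}. c i * delta z (h i) \<phi>)"
      unfolding delta_comb_def by (rule sum.image_gen[OF assms])
    also have "\<dots> = (\<Sum>y\<in>h ` A. \<Sum>i\<in>{i. i \<in> A \<and> h i = y}. c i * delta z y \<phi>)"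
      by (intro sum.cong refl) auto
    finally show ?thesis by (simp add: c'_def sum_distrib_right)
  qed
  then show ?thesis unfolding delta_span_def using assms by blast
qed

lemma delta_span_obtain:
  assumes "\<nu> \<in> delta_span z"
  obtains A c where "finite A" "\<nu> = delta_comb z A c id"
proof -
  obtain A c where "finite A" "\<nu> = (\<lambda>\<phi>. \<Sum>x\<in>A. c x * delta z x \<phi>)"
    using assms unfolding delta_span_def by blast
  then show ?thesis using that by (simp add: delta_comb_def)
qed

lemma delta_comb_abs_le:
  assumes "\<phi> \<in> Lip0 z"
  shows "\<bar>delta_comb z A c h \<phi>\<bar> \<le> (\<Sum>i\<in>A. \<bar>c i\<bar> * dist (h i) z) * Lip \<phi>"
proof -
  have "\<bar>delta_comb z A c h \<phi>\<bar> \<le> (\<Sum>i\<in>A. \<bar>c i * \<phi> (h i)\<bar>)"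
    unfolding delta_comb_apply[OF assms] by (rule sum_abs)
  also have "\<dots> = (\<Sum>i\<in>A. \<bar>c i\<bar> * \<bar>\<phi> (h i)\<bar>)" by (simp add: abs_mult)
  also have "\<dots> \<le> (\<Sum>i\<in>A. \<bar>c i\<bar> * (Lip \<phi> * dist (h i) z))"
    using Lip0_abs_le[OF assms] by (intro sum_mono mult_left_mono) auto
  also have "\<dots> = (\<Sum>i\<in>A. \<bar>c i\<bar> * dist (h i) z) * Lip \<phi>"
    unfolding sum_distrib_right by (simp add: mult_ac)
  finally show ?thesis .
qed

lemma delta_comb_LipDual:
  assumes "finite A"
  shows "delta_comb z A c h \<in> LipDual z"
    and "dnorm z (delta_comb z A c h) \<le> (\<Sum>i\<in>A. \<bar>c i\<bar> * dist (h i) z)"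
proof -
  show L: "delta_comb z A c h \<in> LipDual z"
    unfolding LipDual_def
  proof (intro CollectI conjI allI ballI impI)
    fix \<phi> \<psi> a b assume p: "\<phi> \<in> Lip0 z" "\<psi> \<in> Lip0 z"
    show "delta_comb z A c h (\<lambda>x. a * \<phi> x + b * \<psi> x) = a * delta_comb z A c h \<phi> + b * delta_comb z A c h \<psi>"
      using p Lip0_lincomb[OF p]
      by (simp add: delta_comb_apply sum_distrib_left sum.distrib algebra_simps)
  qed (use delta_comb_out delta_comb_abs_le in blast)+
  show "dnorm z (delta_comb z A c h) \<le> (\<Sum>i\<in>A. \<bar>c i\<bar> * dist (h i) z)"
    by (rule dnorm_le[OF L delta_comb_abs_le]) (auto intro: sum_nonneg)
qed

lemma delta_comb_diff:
  "delta_comb z A c h - delta_comb z A d h = delta_comb z A (\<lambda>i. c i - d i) h"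
  by (simp add: fun_eq_iff delta_comb_def sum_subtractf left_diff_distrib)

lemma dnorm_delta_comb_coeff_diff:
  assumes "finite S" "\<And>a. \<bar>c' a - c a\<bar> \<le> \<theta>"
  shows "dnorm z (delta_comb z S c' id - delta_comb z S c id) \<le> \<theta> * (\<Sum>a\<in>S. dist a z)"
proof -
  have "dnorm z (delta_comb z S c' id - delta_comb z S c id) \<le> (\<Sum>a\<in>S. \<bar>c' a - c a\<bar> * dist a z)"
    using delta_comb_LipDual(2)[OF assms(1), where c = "\<lambda>a. c' a - c a" and h = id]
    by (simp add: delta_comb_diff)
  also have "\<dots> \<le> (\<Sum>a\<in>S. \<theta> * dist a z)" using assms(2) by (intro sum_mono mult_right_mono) auto
  finally show ?thesis by (simp add: sum_distrib_left)
qed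

lemma delta_comb_lincomb:
  assumes "finite A" "finite B"
  shows "(\<lambda>\<phi>. a * delta_comb z A c h \<phi> + b * delta_comb z B d k \<phi>) =
     delta_comb z (A <+> B) (case_sum (\<lambda>i. a * c i) (\<lambda>i. b * d i)) (case_sum h k)"
  by (simp add: fun_eq_iff delta_comb_def sum.Plus[OF assms] sum_distrib_left mult.assoc)

text \<open>The base point carries no mass: \<open>delta z z = 0\<close> on \<open>Lip0 z\<close>.\<close>
lemma delta_comb_remove_base_point:
  assumes "finite A" "finite S" "A - {z} \<subseteq> S" "z \<notin> S"
  shows "delta_comb z A c id = delta_comb z S (\<lambda>a. if a \<in> A then c a else 0) id"
proof
  fix \<phi> show "delta_comb z A c id \<phi> = delta_comb z S (\<lambda>a. if a \<in> A then c a else 0) id \<phi>"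
  proof (cases "\<phi> \<in> Lip0 z")
    case True
    have "(\<Sum>a\<in>S. (if a \<in> A then c a else 0) * \<phi> a) = (\<Sum>a\<in>S. if a \<in> A then c a * \<phi> a else 0)"
      by (intro sum.cong) auto
    also have "\<dots> = (\<Sum>a\<in>S \<inter> A. c a * \<phi> a)"
      by (rule sum.inter_restrict[symmetric, OF assms(2)])
    also have "S \<inter> A = A - {z}" using assms(3,4) by auto
    also have "(\<Sum>a\<in>A - {z}. c a * \<phi> a) = (\<Sum>a\<in>A. c a * \<phi> a)"
      using sum_diff1[OF assms(1), of "\<lambda>a. c a * \<phi> a" z] True by (simp add: Lip0_def)
    finally show ?thesis using True by (simp add: delta_comb_apply)
  qed (simp add: delta_comb_out)
qed

lemma FreeSp_LipDual: "\<mu> \<in> FreeSp z \<Longrightarrow> \<mu> \<in> LipDual z"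
  unfolding FreeSp_def by auto

lemma delta_span_subset_FreeSp: "\<nu> \<in> delta_span z \<Longrightarrow> \<nu> \<in> FreeSp z"
proof -
  assume \<nu>: "\<nu> \<in> delta_span z"
  then obtain A c where "finite A" "\<nu> = delta_comb z A c id" by (rule delta_span_obtain)
  then have "\<nu> \<in> LipDual z" using delta_comb_LipDual by blast
  moreover have "dnorm z (\<nu> - \<nu>) < e" if "e > 0" for e
    using dnorm_le[OF LipDual_zero, of z 0] that by (simp add: fun_diff_def)
  ultimately show ?thesis unfolding FreeSp_def using \<nu> by blast
qed

lemma delta_comb_FreeSp: "finite A \<Longrightarrow> delta_comb z A c h \<in> FreeSp z"
  using delta_span_subset_FreeSp delta_comb_in_span by blast

lemma delta_FreeSp: "delta z x \<in> FreeSp z"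
  by (simp add: delta_eq_delta_comb delta_comb_FreeSp)

lemma FreeSp_approx:
  assumes "\<mu> \<in> FreeSp z" "e > 0"
  obtains A c where "finite A" "dnorm z (\<mu> - delta_comb z A c id) < e"
proof -
  obtain \<nu> where "\<nu> \<in> delta_span z" "dnorm z (\<mu> - \<nu>) < e"
    using assms unfolding FreeSp_def by blast
  then show ?thesis using that by (metis delta_span_obtain)
qed

lemma FreeSp_lincomb:
  assumes "\<mu> \<in> FreeSp z" "\<nu> \<in> FreeSp z"
  shows "(\<lambda>\<phi>. a * \<mu> \<phi> + b * \<nu> \<phi>) \<in> FreeSp z"
proof -
  have L: "\<mu> \<in> LipDual z" "\<nu> \<in> LipDual z" using assms FreeSp_LipDual by auto
  have "\<exists>w\<in>delta_span z. dnorm z ((\<lambda>\<phi>. a * \<mu> \<phi> + b * \<nu> \<phi>) - w) < e" if e: "e > 0" for e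
  proof -
    define e' where "e' = e / (\<bar>a\<bar> + \<bar>b\<bar> + 1)"
    have e': "e' > 0" using e by (simp add: e'_def add_pos_nonneg)
    obtain A c where A: "finite A" "dnorm z (\<mu> - delta_comb z A c id) < e'"
      using FreeSp_approx[OF assms(1) e'] by blast
    obtain B d where B: "finite B" "dnorm z (\<nu> - delta_comb z B d id) < e'"
      using FreeSp_approx[OF assms(2) e'] by blast
    define w where "w = (\<lambda>\<phi>. a * delta_comb z A c id \<phi> + b * delta_comb z B d id \<phi>)"
    have w: "w \<in> delta_span z"
      unfolding w_def delta_comb_lincomb[OF A(1) B(1)] using A B by (intro delta_comb_in_span) auto
    have LA: "\<mu> - delta_comb z A c id \<in> LipDual z" "\<nu> - delta_comb z B d id \<in> LipDual z"
      using L A B by (auto intro!: LipDual_diff delta_comb_LipDual)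
    have "(\<lambda>\<phi>. a * \<mu> \<phi> + b * \<nu> \<phi>) - w
        = (\<lambda>\<phi>. a * (\<mu> - delta_comb z A c id) \<phi> + b * (\<nu> - delta_comb z B d id) \<phi>)"
      by (simp add: fun_eq_iff w_def algebra_simps)
    then have "dnorm z ((\<lambda>\<phi>. a * \<mu> \<phi> + b * \<nu> \<phi>) - w)
        \<le> \<bar>a\<bar> * dnorm z (\<mu> - delta_comb z A c id) + \<bar>b\<bar> * dnorm z (\<nu> - delta_comb z B d id)"
      using LipDual_lincomb(2)[OF LA] by simp
    also have "\<dots> \<le> \<bar>a\<bar> * e' + \<bar>b\<bar> * e'"
      using A B by (intro add_mono mult_left_mono) auto
    also have "\<dots> = (\<bar>a\<bar> + \<bar>b\<bar>) * e'" by (simp add: distrib_right)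
    also have "\<dots> < e" unfolding e'_def by (rule mult_divide_plus_one_less) (use e in auto)
    finally show ?thesis using w by blast
  qed
  then show ?thesis unfolding FreeSp_def using LipDual_lincomb(1)[OF L] by blast
qed

lemma FreeSp_diff: "\<mu> \<in> FreeSp z \<Longrightarrow> \<nu> \<in> FreeSp z \<Longrightarrow> \<mu> - \<nu> \<in> FreeSp z"
  using FreeSp_lincomb[of \<mu> z \<nu> 1 "-1"] by (simp add: fun_diff_def)

section \<open>Push-forward of functionals along Lipschitz maps\<close>

definition push :: "'a::metric_space \<Rightarrow> ('a \<Rightarrow> 'a) \<Rightarrow> (('a \<Rightarrow> real) \<Rightarrow> real) \<Rightarrow>
    (('a \<Rightarrow> real) \<Rightarrow> real)" where
  "push z g \<mu> = (\<lambda>\<phi>. if \<phi> \<in> Lip0 z then \<mu> (\<phi> \<circ> g) else 0)"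

lemma push_LipDual:
  assumes "\<mu> \<in> LipDual z" "K-lipschitz_on UNIV g" "g z = z"
  shows "push z g \<mu> \<in> LipDual z" and "dnorm z (push z g \<mu>) \<le> K * dnorm z \<mu>"
proof -
  have bound: "\<bar>push z g \<mu> \<phi>\<bar> \<le> (K * dnorm z \<mu>) * Lip \<phi>" if p: "\<phi> \<in> Lip0 z" for \<phi>
  proof -
    have "\<bar>push z g \<mu> \<phi>\<bar> \<le> dnorm z \<mu> * Lip (\<phi> \<circ> g)"
      using LipDual_abs_le[OF assms(1) Lip0_comp(1)[OF p assms(2,3)]] p by (simp add: push_def)
    also have "\<dots> \<le> dnorm z \<mu> * (Lip \<phi> * K)"
      by (rule mult_left_mono[OF Lip0_comp(2)[OF p assms(2,3)] dnorm_nonneg[OF assms(1)]])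
    finally show ?thesis by (simp add: algebra_simps)
  qed
  show L: "push z g \<mu> \<in> LipDual z"
    unfolding LipDual_def
  proof (intro CollectI conjI allI ballI impI)
    fix \<phi> \<psi> a b assume p: "\<phi> \<in> Lip0 z" "\<psi> \<in> Lip0 z"
    have "(\<lambda>x. a * \<phi> x + b * \<psi> x) \<circ> g = (\<lambda>x. a * (\<phi> \<circ> g) x + b * (\<psi> \<circ> g) x)"
      by (simp add: comp_def)
    then show "push z g \<mu> (\<lambda>x. a * \<phi> x + b * \<psi> x) = a * push z g \<mu> \<phi> + b * push z g \<mu> \<psi>"
      using p Lip0_lincomb[OF p] LipDual_lincomb_apply[OF assms(1) Lip0_comp(1)[OF _ assms(2,3)]
          Lip0_comp(1)[OF _ assms(2,3)]]
      by (simp add: push_def)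
  qed (use bound in \<open>auto simp: push_def\<close>)
  show "dnorm z (push z g \<mu>) \<le> K * dnorm z \<mu>"
    using lipschitz_on_nonneg[OF assms(2)] dnorm_nonneg[OF assms(1)] by (intro dnorm_le[OF L bound]) auto
qed

lemma push_delta_comb:
  assumes "K-lipschitz_on UNIV g" "g z = z"
  shows "push z g (delta_comb z A c h) = delta_comb z A c (g \<circ> h)"
proof
  fix \<phi> show "push z g (delta_comb z A c h) \<phi> = delta_comb z A c (g \<circ> h) \<phi>"
    using Lip0_comp(1)[OF _ assms]
    by (cases "\<phi> \<in> Lip0 z") (auto simp: push_def delta_comb_apply delta_comb_out)
qed

lemma push_diff: "push z g \<mu> - push z g \<nu> = push z g (\<mu> - \<nu>)"
  by (simp add: fun_eq_iff push_def)

lemma push_push: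
  assumes "K-lipschitz_on UNIV g" "g z = z"
  shows "push z g (push z h \<mu>) = push z (g \<circ> h) \<mu>"
proof
  fix \<phi> show "push z g (push z h \<mu>) \<phi> = push z (g \<circ> h) \<mu> \<phi>"
    using Lip0_comp(1)[OF _ assms] by (cases "\<phi> \<in> Lip0 z") (auto simp: push_def comp_assoc)
qed

lemma push_id: "\<mu> \<in> LipDual z \<Longrightarrow> push z id \<mu> = \<mu>"
  by (simp add: fun_eq_iff push_def LipDual_out)

lemma push_FreeSp:
  assumes "\<mu> \<in> FreeSp z" "K-lipschitz_on UNIV g" "g z = z"
  shows "push z g \<mu> \<in> FreeSp z"
proof -
  have L: "\<mu> \<in> LipDual z" using assms FreeSp_LipDual by auto
  have K: "K \<ge> 0" using assms lipschitz_on_nonneg by auto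
  have "\<exists>w\<in>delta_span z. dnorm z (push z g \<mu> - w) < e" if e: "e > 0" for e
  proof -
    obtain A c where A: "finite A" "dnorm z (\<mu> - delta_comb z A c id) < e / (K + 1)"
      using FreeSp_approx[OF assms(1)] e K by (metis add_nonneg_pos divide_pos_pos zero_less_one)
    have "dnorm z (push z g \<mu> - push z g (delta_comb z A c id))
        = dnorm z (push z g (\<mu> - delta_comb z A c id))"
      by (simp add: push_diff)
    also have "\<dots> \<le> K * dnorm z (\<mu> - delta_comb z A c id)"
      using L A by (intro push_LipDual(2)[OF _ assms(2,3)] LipDual_diff delta_comb_LipDual)
    also have "\<dots> \<le> K * (e / (K + 1))" using A K by (intro mult_left_mono) auto
    also have "\<dots> < e" by (rule mult_divide_plus_one_less) (use K e in auto)
    finally show ?thesis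
      using delta_comb_in_span[OF A(1)] unfolding push_delta_comb[OF assms(2,3)] by blast
  qed
  then show ?thesis unfolding FreeSp_def using push_LipDual(1)[OF L assms(2,3)] by blast
qed

lemma push_minus_LipDual:
  assumes "\<mu> \<in> FreeSp z" "K-lipschitz_on UNIV g" "g z = z"
  shows "push z g \<mu> - \<mu> \<in> LipDual z"
  using assms by (intro LipDual_diff push_LipDual FreeSp_LipDual)

lemma bounded_op_FD:
  assumes "bounded_op_F z T"
  shows "\<mu> \<in> FreeSp z \<Longrightarrow> T \<mu> \<in> FreeSp z"
    and "\<mu> \<in> FreeSp z \<Longrightarrow> \<nu> \<in> FreeSp z \<Longrightarrow>
      T (\<lambda>\<phi>. a * \<mu> \<phi> + b * \<nu> \<phi>) = (\<lambda>\<phi>. a * T \<mu> \<phi> + b * T \<nu> \<phi>)"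
    and "\<exists>K. \<forall>\<mu>\<in>FreeSp z. dnorm z (T \<mu>) \<le> K * dnorm z \<mu>"
    and "\<mu> \<notin> FreeSp z \<Longrightarrow> T \<mu> = (\<lambda>_. 0)"
  using assms unfolding bounded_op_F_def by blast+

lemma bounded_op_F_diff:
  assumes "bounded_op_F z T" "\<mu> \<in> FreeSp z" "\<nu> \<in> FreeSp z"
  shows "T (\<mu> - \<nu>) = T \<mu> - T \<nu>"
proof -
  have "T (\<lambda>\<phi>. 1 * \<mu> \<phi> + (-1) * \<nu> \<phi>) = (\<lambda>\<phi>. 1 * T \<mu> \<phi> + (-1) * T \<nu> \<phi>)"
    using bounded_op_FD(2)[OF assms] .
  then show ?thesis by (simp add: fun_diff_def)
qed

lemma bounded_op_F_bound:
  assumes "bounded_op_F z T"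
  obtains K where "0 \<le> K" "\<And>\<mu>. \<mu> \<in> FreeSp z \<Longrightarrow> dnorm z (T \<mu>) \<le> K * dnorm z \<mu>"
proof -
  obtain K where K: "\<And>\<mu>. \<mu> \<in> FreeSp z \<Longrightarrow> dnorm z (T \<mu>) \<le> K * dnorm z \<mu>"
    using bounded_op_FD(3)[OF assms] by blast
  have "dnorm z (T \<mu>) \<le> \<bar>K\<bar> * dnorm z \<mu>" if "\<mu> \<in> FreeSp z" for \<mu>
    using K[OF that] mult_right_mono[OF abs_ge_self dnorm_nonneg[OF FreeSp_LipDual[OF that]], of K]
    by linarith
  then show ?thesis using that[of "\<bar>K\<bar>"] by simp
qed

lemma bounded_op_F_eqI:
  assumes T: "bounded_op_F z T" and T': "bounded_op_F z T'"
    and span: "\<And>\<nu>. \<nu> \<in> delta_span z \<Longrightarrow> T \<nu> = T' \<nu>"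
  shows "T = T'"
proof
  fix \<mu> show "T \<mu> = T' \<mu>"
  proof (cases "\<mu> \<in> FreeSp z")
    case m: True
    obtain K where K: "0 \<le> K" "\<And>\<mu>. \<mu> \<in> FreeSp z \<Longrightarrow> dnorm z (T \<mu>) \<le> K * dnorm z \<mu>"
      using bounded_op_F_bound[OF T] by blast
    obtain K' where K': "0 \<le> K'" "\<And>\<mu>. \<mu> \<in> FreeSp z \<Longrightarrow> dnorm z (T' \<mu>) \<le> K' * dnorm z \<mu>"
      using bounded_op_F_bound[OF T'] by blast
    define D where "D = T \<mu> - T' \<mu>"
    have small: "dnorm z D < e" if e: "0 < e" for e
    proof -
      have "0 < e / (K + K' + 1)" using e K(1) K'(1) by simp
      then obtain \<nu> where \<nu>: "\<nu> \<in> delta_span z" "dnorm z (\<mu> - \<nu>) < e / (K + K' + 1)"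
        using m unfolding FreeSp_def by blast
      have \<nu>F: "\<nu> \<in> FreeSp z" using delta_span_subset_FreeSp[OF \<nu>(1)] .
      have dF: "\<mu> - \<nu> \<in> FreeSp z" using FreeSp_diff[OF m \<nu>F] .
      have "T (\<mu> - \<nu>) - T' (\<mu> - \<nu>) = D"
        unfolding D_def bounded_op_F_diff[OF T m \<nu>F] bounded_op_F_diff[OF T' m \<nu>F] span[OF \<nu>(1)]
        by (simp add: fun_diff_def)
      then have "dnorm z D \<le> dnorm z (T (\<mu> - \<nu>)) + dnorm z (T' (\<mu> - \<nu>))"
        using LipDual_diff(2)[OF FreeSp_LipDual FreeSp_LipDual, OF bounded_op_FD(1)[OF T dF]
            bounded_op_FD(1)[OF T' dF]] by (simp only:)
      also have "\<dots> \<le> (K + K') * dnorm z (\<mu> - \<nu>)"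
        using K(2)[OF dF] K'(2)[OF dF] by (simp add: distrib_right)
      also have "\<dots> \<le> (K + K') * (e / (K + K' + 1))"
        using \<nu>(2) K(1) K'(1) by (intro mult_left_mono) auto
      also have "\<dots> < e" by (rule mult_divide_plus_one_less) (use e K(1) K'(1) in auto)
      finally show ?thesis .
    qed
    have "D \<in> LipDual z"
      unfolding D_def using bounded_op_FD(1)[OF T m] bounded_op_FD(1)[OF T' m]
      by (intro LipDual_diff FreeSp_LipDual)
    moreover have "dnorm z D \<le> 0" using small[of "dnorm z D"] by force
    ultimately have "D = (\<lambda>_. 0)" by (rule dnorm_le_0_imp_zero)
    then show ?thesis by (simp add: D_def fun_eq_iff)
  qed (simp add: bounded_op_FD(4)[OF T] bounded_op_FD(4)[OF T'])
qed

lemma bounded_op_F_delta_comb: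
  assumes T: "bounded_op_F z T" and Td: "\<And>x. T (delta z x) = delta z (f x)" and A: "finite A"
  shows "T (delta_comb z A c id) = delta_comb z A c f"
  using A
proof (induction A rule: finite_induct)
  case empty
  have "T (\<lambda>\<phi>. 0 * delta z z \<phi> + 0 * delta z z \<phi>) = (\<lambda>\<phi>. 0 * T (delta z z) \<phi> + 0 * T (delta z z) \<phi>)"
    by (rule bounded_op_FD(2)[OF T delta_FreeSp delta_FreeSp])
  then show ?case by (simp add: delta_comb_def)
next
  case (insert x A)
  have split: "delta_comb z (insert x A) c h = (\<lambda>\<phi>. c x * delta z (h x) \<phi> + 1 * delta_comb z A c h \<phi>)"
    for h :: "'a \<Rightarrow> 'a"
    using insert(1,2) by (simp add: delta_comb_def fun_eq_iff)
  have "T (delta_comb z (insert x A) c id)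
      = (\<lambda>\<phi>. c x * T (delta z x) \<phi> + 1 * T (delta_comb z A c id) \<phi>)"
    unfolding split[of id] id_apply
    by (rule bounded_op_FD(2)[OF T delta_FreeSp delta_comb_FreeSp[OF insert(1)]])
  also have "\<dots> = delta_comb z (insert x A) c f"
    unfolding split[of f] insert.IH Td ..
  finally show ?case .
qed

definition lift_op :: "'a::metric_space \<Rightarrow> ('a \<Rightarrow> 'a) \<Rightarrow> (('a \<Rightarrow> real) \<Rightarrow> real) \<Rightarrow>
    (('a \<Rightarrow> real) \<Rightarrow> real)" where
  "lift_op z f \<mu> = (if \<mu> \<in> FreeSp z then push z f \<mu> else (\<lambda>_. 0))"

lemma bounded_op_F_lift_op:
  assumes "K-lipschitz_on UNIV f" "f z = z"
  shows "bounded_op_F z (lift_op z f)"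
  unfolding bounded_op_F_def
proof (intro conjI ballI allI impI)
  fix \<mu> \<nu> a b assume m: "\<mu> \<in> FreeSp z" "\<nu> \<in> FreeSp z"
  show "lift_op z f (\<lambda>\<phi>. a * \<mu> \<phi> + b * \<nu> \<phi>) = (\<lambda>\<phi>. a * lift_op z f \<mu> \<phi> + b * lift_op z f \<nu> \<phi>)"
    using FreeSp_lincomb[OF m] m by (simp add: lift_op_def push_def fun_eq_iff)
next
  show "\<exists>K. \<forall>\<mu>\<in>FreeSp z. dnorm z (lift_op z f \<mu>) \<le> K * dnorm z \<mu>"
    using push_LipDual(2)[OF FreeSp_LipDual assms] by (auto simp: lift_op_def)
qed (auto simp: lift_op_def push_FreeSp[OF _ assms])

lemma fhat_eq_lift_op:
  assumes f: "K-lipschitz_on UNIV f" "f z = z"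
  shows "fhat z f = lift_op z f"
  unfolding fhat_def
proof (rule the_equality)
  have "lift_op z f (delta z x) = delta z (f x)" for x
    using push_delta_comb[OF f, of "{x}" "\<lambda>_. 1" id] delta_FreeSp[of z x]
    unfolding delta_eq_delta_comb by (simp add: lift_op_def delta_comb_def)
  then show "bounded_op_F z (lift_op z f) \<and> (\<forall>x. lift_op z f (delta z x) = delta z (f x))"
    using bounded_op_F_lift_op[OF f] by blast
next
  fix T assume T: "bounded_op_F z T \<and> (\<forall>x. T (delta z x) = delta z (f x))"
  show "T = lift_op z f"
  proof (rule bounded_op_F_eqI[OF conjunct1[OF T] bounded_op_F_lift_op[OF f]])
    fix \<nu> assume "\<nu> \<in> delta_span z"
    then obtain A c where A: "finite A" "\<nu> = delta_comb z A c id" by (rule delta_span_obtain)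
    then show "T \<nu> = lift_op z f \<nu>"
      using bounded_op_F_delta_comb[OF conjunct1[OF T] _ A(1), of f c] T
        delta_comb_FreeSp[OF A(1), of z c id]
      by (simp add: lift_op_def push_delta_comb[OF f])
  qed
qed

lemma fhat_funpow:
  assumes f: "K-lipschitz_on UNIV f" "f z = z" and m: "\<mu> \<in> FreeSp z"
  shows "(fhat z f ^^ n) \<mu> = push z (f ^^ n) \<mu>"
proof (induction n)
  case 0
  show ?case using push_id[OF FreeSp_LipDual[OF m]] by (simp add: id_def)
next
  case (Suc n)
  have "push z (f ^^ n) \<mu> \<in> FreeSp z"
    using push_FreeSp[OF m funpow_lipschitz[OF f]] .
  then show ?case
    using Suc push_push[OF f] by (simp add: fhat_eq_lift_op[OF f] lift_op_def comp_def)
qed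

lemma liminf_ereal_eq_0_iff:
  fixes u :: "nat \<Rightarrow> real"
  assumes "\<And>n. 0 \<le> u n"
  shows "liminf (\<lambda>n. ereal (u n)) = 0 \<longleftrightarrow> (\<forall>e>0. \<forall>N. \<exists>n\<ge>N. u n < e)"
proof
  assume lim: "liminf (\<lambda>n. ereal (u n)) = 0"
  show "\<forall>e>0. \<forall>N. \<exists>n\<ge>N. u n < e"
  proof (intro allI impI, rule ccontr)
    fix e :: real and N assume e: "0 < e" and "\<not> (\<exists>n\<ge>N. u n < e)"
    then have "eventually (\<lambda>n. ereal e \<le> ereal (u n)) sequentially"
      by (auto simp: eventually_sequentially not_less)
    then have "ereal e \<le> liminf (\<lambda>n. ereal (u n))" by (rule Liminf_bounded)
    then show False using lim e by simp
  qed
next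
  assume small: "\<forall>e>0. \<forall>N. \<exists>n\<ge>N. u n < e"
  show "liminf (\<lambda>n. ereal (u n)) = 0"
  proof (rule antisym)
    show "0 \<le> liminf (\<lambda>n. ereal (u n))" by (rule Liminf_bounded) (use assms in auto)
    show "liminf (\<lambda>n. ereal (u n)) \<le> 0"
    proof (rule ereal_le_epsilon2)
      fix e :: real assume e: "0 < e"
      show "liminf (\<lambda>n. ereal (u n)) \<le> 0 + ereal e"
      proof (rule ccontr)
        assume "\<not> ?thesis"
        then have "ereal e < liminf (\<lambda>n. ereal (u n))" by simp
        then have "eventually (\<lambda>n. ereal e < ereal (u n)) sequentially"
          using le_Liminf_iff[of "liminf (\<lambda>n. ereal (u n))" sequentially "\<lambda>n. ereal (u n)"] by auto
        then obtain N where N: "\<And>n. n \<ge> N \<Longrightarrow> e < u n" by (auto simp: eventually_sequentially)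
        obtain n where "n \<ge> N" "u n < e" using small e by blast
        then show False using N by force
      qed
    qed
  qed
qed

lemma RT_fhat_iff:
  assumes f: "K-lipschitz_on UNIV f" "f z = z" and m: "\<mu> \<in> FreeSp z"
  shows "\<mu> \<in> RT z (fhat z f) \<longleftrightarrow> (\<forall>e>0. \<forall>N. \<exists>n\<ge>N. dnorm z (push z (f ^^ n) \<mu> - \<mu>) < e)"
proof -
  have nonneg: "0 \<le> dnorm z (push z (f ^^ n) \<mu> - \<mu>)" for n
    by (rule dnorm_nonneg[OF push_minus_LipDual[OF m funpow_lipschitz[OF f]]])
  show ?thesis
    using m by (simp add: RT_def fhat_funpow[OF f m] liminf_ereal_eq_0_iff[OF nonneg])
qed

section \<open>Recurrence and rigidity of \<open>fhat\<close> from simultaneous recurrence of \<open>f\<close>\<close>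

lemma dnorm_delta_comb_move:
  assumes "finite A"
  shows "dnorm z (delta_comb z A c g - delta_comb z A c id) \<le> (\<Sum>a\<in>A. \<bar>c a\<bar> * dist (g a) a)"
proof (rule dnorm_le)
  show "delta_comb z A c g - delta_comb z A c id \<in> LipDual z"
    using assms by (intro LipDual_diff delta_comb_LipDual)
  fix \<phi> assume p: "\<phi> \<in> Lip0 z"
  have "\<bar>(delta_comb z A c g - delta_comb z A c id) \<phi>\<bar> = \<bar>\<Sum>a\<in>A. c a * (\<phi> (g a) - \<phi> a)\<bar>"
    using p by (simp add: delta_comb_apply sum_subtractf right_diff_distrib)
  also have "\<dots> \<le> (\<Sum>a\<in>A. \<bar>c a\<bar> * (Lip \<phi> * dist (g a) a))"
    by (rule order_trans[OF sum_abs sum_mono]) (simp add: abs_mult mult_left_mono Lip0_dist[OF p])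
  also have "\<dots> = (\<Sum>a\<in>A. \<bar>c a\<bar> * dist (g a) a) * Lip \<phi>"
    unfolding sum_distrib_right by (simp add: mult_ac)
  finally show "\<bar>(delta_comb z A c g - delta_comb z A c id) \<phi>\<bar> \<le> (\<Sum>a\<in>A. \<bar>c a\<bar> * dist (g a) a) * Lip \<phi>" .
qed (auto intro: sum_nonneg)

lemma dnorm_push_diff_le:
  assumes m: "\<mu> \<in> FreeSp z" and A: "finite A" and g: "C-lipschitz_on UNIV g" "g z = z"
  shows "dnorm z (push z g \<mu> - \<mu>)
    \<le> (C + 1) * dnorm z (\<mu> - delta_comb z A c id) + (\<Sum>a\<in>A. \<bar>c a\<bar> * dist (g a) a)"
proof -
  define \<nu> where "\<nu> = delta_comb z A c id"
  have L\<nu>: "\<nu> \<in> LipDual z" unfolding \<nu>_def by (rule delta_comb_LipDual(1)[OF A])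
  have L: "\<mu> - \<nu> \<in> LipDual z" "delta_comb z A c g - \<nu> \<in> LipDual z"
    using LipDual_diff(1)[OF FreeSp_LipDual[OF m] L\<nu>] LipDual_diff(1)[OF delta_comb_LipDual(1)[OF A] L\<nu>]
    by blast+
  have push_\<nu>: "push z g \<nu> = delta_comb z A c g"
    using push_delta_comb[OF g, of A c id] by (simp add: \<nu>_def)
  have "push z g \<mu> - \<mu> = (\<lambda>\<phi>. 1 * (push z g (\<mu> - \<nu>) - (\<mu> - \<nu>)) \<phi> + 1 * (delta_comb z A c g - \<nu>) \<phi>)"
    unfolding push_diff[symmetric] push_\<nu> by (simp add: fun_eq_iff)
  then have "dnorm z (push z g \<mu> - \<mu>) \<le> dnorm z (push z g (\<mu> - \<nu>) - (\<mu> - \<nu>)) + dnorm z (delta_comb z A c g - \<nu>)"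
    using LipDual_lincomb(2)[OF LipDual_diff(1)[OF push_LipDual(1)[OF L(1) g] L(1)] L(2), of 1 1] by simp
  also have "\<dots> \<le> (C * dnorm z (\<mu> - \<nu>) + dnorm z (\<mu> - \<nu>)) + (\<Sum>a\<in>A. \<bar>c a\<bar> * dist (g a) a)"
    using LipDual_diff(2)[OF push_LipDual(1)[OF L(1) g] L(1)] push_LipDual(2)[OF L(1) g]
      dnorm_delta_comb_move[OF A, of z c g]
    by (simp add: \<nu>_def)
  finally show ?thesis by (simp add: \<nu>_def algebra_simps)
qed

lemma push_close_to_id:
  assumes m: "\<mu> \<in> FreeSp z" and C: "0 \<le> C" and e: "0 < e"
  obtains A \<delta> where "finite A" "0 < \<delta>"
    "\<And>g. C-lipschitz_on UNIV g \<Longrightarrow> g z = z \<Longrightarrow> \<forall>a\<in>A. dist (g a) a < \<delta> \<Longrightarrow>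
      dnorm z (push z g \<mu> - \<mu>) < e"
proof -
  have "0 < e / 2 / (C + 1)" using e C by simp
  then obtain A c where A: "finite A" "dnorm z (\<mu> - delta_comb z A c id) < e / 2 / (C + 1)"
    using FreeSp_approx[OF m] by blast
  define S where "S = (\<Sum>a\<in>A. \<bar>c a\<bar>)"
  have S: "0 \<le> S" unfolding S_def by (auto intro: sum_nonneg)
  show ?thesis
  proof (rule that[OF A(1)])
    show "0 < e / 2 / (S + 1)" using e S by simp
    fix g assume g: "C-lipschitz_on UNIV g" "g z = z" and close: "\<forall>a\<in>A. dist (g a) a < e / 2 / (S + 1)"
    have "dnorm z (push z g \<mu> - \<mu>)
        \<le> (C + 1) * dnorm z (\<mu> - delta_comb z A c id) + (\<Sum>a\<in>A. \<bar>c a\<bar> * dist (g a) a)"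
      by (rule dnorm_push_diff_le[OF m A(1) g])
    also have "\<dots> < (C + 1) * (e / 2 / (C + 1)) + (\<Sum>a\<in>A. \<bar>c a\<bar> * (e / 2 / (S + 1)))"
      using A(2) close C by (intro add_less_le_mono mult_strict_left_mono sum_mono mult_left_mono) auto
    also have "\<dots> = e / 2 + S * (e / 2 / (S + 1))"
    proof -
      have "(C + 1) * (e / 2 / (C + 1)) = e / 2" using C by (simp add: field_simps)
      moreover have "(\<Sum>a\<in>A. \<bar>c a\<bar> * (e / 2 / (S + 1))) = S * (e / 2 / (S + 1))"
        unfolding S_def by (rule sum_distrib_right[symmetric])
      ultimately show ?thesis by (simp only:)
    qed
    also have "\<dots> < e / 2 + e / 2" using mult_divide_plus_one_less[OF S half_gt_zero[OF e]] by linarith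
    finally show "dnorm z (push z g \<mu> - \<mu>) < e" by simp
  qed
qed

definition simultaneously_recurrent :: "('a::metric_space \<Rightarrow> 'a) \<Rightarrow> bool" where
  "simultaneously_recurrent f \<longleftrightarrow>
    (\<forall>A \<epsilon> N. finite A \<longrightarrow> 0 < \<epsilon> \<longrightarrow> (\<exists>n\<ge>N. \<forall>x\<in>A. dist ((f ^^ n) x) x < \<epsilon>))"

lemma RT_fhat_eq_FreeSp:
  assumes f: "K-lipschitz_on UNIV f" "f z = z" and pw: "\<And>n. C-lipschitz_on UNIV (f ^^ n)"
    and rec: "simultaneously_recurrent f"
  shows "RT z (fhat z f) = FreeSp z"
proof (intro equalityI subsetI)
  fix \<mu> assume "\<mu> \<in> RT z (fhat z f)"
  then show "\<mu> \<in> FreeSp z" unfolding RT_def by blast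
next
  fix \<mu> assume m: "\<mu> \<in> FreeSp z"
  have "\<exists>n\<ge>N. dnorm z (push z (f ^^ n) \<mu> - \<mu>) < e" if e: "0 < e" for e N
  proof -
    obtain A \<delta> where A: "finite A" "0 < \<delta>" and close: "\<And>g. C-lipschitz_on UNIV g \<Longrightarrow> g z = z \<Longrightarrow>
        \<forall>a\<in>A. dist (g a) a < \<delta> \<Longrightarrow> dnorm z (push z g \<mu> - \<mu>) < e"
      using push_close_to_id[OF m lipschitz_on_nonneg[OF pw] e] by blast
    obtain n where "n \<ge> N" "\<forall>a\<in>A. dist ((f ^^ n) a) a < \<delta>"
      using rec A unfolding simultaneously_recurrent_def by blast
    then show ?thesis using close[OF pw funpow_lipschitz(2)[OF f]] by blast
  qed
  then show "\<mu> \<in> RT z (fhat z f)" using RT_fhat_iff[OF f m] by blast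
qed

lemma tendsto_dnorm_push_diff:
  assumes g: "\<And>j. C-lipschitz_on UNIV (g j)" "\<And>j. g j z = z"
    and lim: "\<And>x. (\<lambda>j. g j x) \<longlonglongrightarrow> x" and m: "\<mu> \<in> FreeSp z"
  shows "(\<lambda>j. dnorm z (push z (g j) \<mu> - \<mu>)) \<longlonglongrightarrow> 0"
proof (rule tendstoI)
  fix e :: real assume e: "0 < e"
  obtain A \<delta> where A: "finite A" "0 < \<delta>" and close: "\<And>h. C-lipschitz_on UNIV h \<Longrightarrow> h z = z \<Longrightarrow>
      \<forall>a\<in>A. dist (h a) a < \<delta> \<Longrightarrow> dnorm z (push z h \<mu> - \<mu>) < e"
    using push_close_to_id[OF m lipschitz_on_nonneg[OF g(1)] e] by blast
  have "eventually (\<lambda>j. \<forall>a\<in>A. dist (g j a) a < \<delta>) sequentially"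
    using A by (intro eventually_ball_finite ballI tendstoD[OF lim]) auto
  then show "eventually (\<lambda>j. dist (dnorm z (push z (g j) \<mu> - \<mu>)) 0 < e) sequentially"
  proof eventually_elim
    case (elim j)
    then show ?case
      using close[OF g elim] dnorm_nonneg[OF push_minus_LipDual[OF m g]] by simp
  qed
qed

lemma simultaneously_recurrent_subseq:
  assumes rec: "simultaneously_recurrent f" and D: "countable D"
  obtains r where "strict_mono r" "\<And>x. x \<in> D \<Longrightarrow> (\<lambda>j. (f ^^ r j) x) \<longlonglongrightarrow> x"
proof (cases "D = {}")
  case True
  have "strict_mono (id :: nat \<Rightarrow> nat)" by (simp add: strict_mono_def)
  then show ?thesis using that True by blast
next
  case False
  define d where "d = from_nat_into D"
  define P where "P j n \<longleftrightarrow> (\<forall>i\<le>j. dist ((f ^^ n) (d i)) (d i) < inverse (real (Suc j)))" for j n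
  have ex: "\<exists>n\<ge>m. P j n" for j m
    using rec[unfolded simultaneously_recurrent_def, rule_format, of "d ` {..j}" "inverse (real (Suc j))" m]
    unfolding P_def by auto
  have "\<exists>r. \<forall>j. P j (r j) \<and> r j < r (Suc j)"
  proof (rule dependent_nat_choice)
    show "\<exists>n. P 0 n" using ex by blast
    fix n j assume "P j n"
    show "\<exists>n'. P (Suc j) n' \<and> n < n'" using ex[of "Suc n" "Suc j"] by (auto simp: Suc_le_eq)
  qed
  then obtain r where r: "\<And>j. P j (r j)" "\<And>j. r j < r (Suc j)" by blast
  show ?thesis
  proof (rule that)
    show "strict_mono r" using r(2) strict_mono_Suc_iff by blast
    fix x assume "x \<in> D"
    then obtain i where x: "x = d i" using from_nat_into_surj[OF D] unfolding d_def by metis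
    have "eventually (\<lambda>j. norm (dist ((f ^^ r j) x) x) \<le> inverse (real (Suc j))) sequentially"
      unfolding eventually_sequentially
      using r(1) unfolding P_def x by (auto intro!: exI[of _ i] less_imp_le)
    from Lim_null_comparison[OF this LIMSEQ_inverse_real_of_nat]
    show "(\<lambda>j. (f ^^ r j) x) \<longlonglongrightarrow> x" by (rule iffD2[OF tendsto_dist_iff])
  qed
qed

lemma tendsto_id_of_dense:
  fixes g :: "nat \<Rightarrow> 'a::metric_space \<Rightarrow> 'a"
  assumes g: "\<And>j. C-lipschitz_on UNIV (g j)" and D: "closure D = UNIV"
    and lim: "\<And>y. y \<in> D \<Longrightarrow> (\<lambda>j. g j y) \<longlonglongrightarrow> y"
  shows "(\<lambda>j. g j x) \<longlonglongrightarrow> x"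
proof (rule tendstoI)
  fix e :: real assume e: "0 < e"
  have C: "0 \<le> C" using lipschitz_on_nonneg[OF g] .
  define \<delta> where "\<delta> = e / 2 / (C + 1)"
  have \<delta>: "0 < \<delta>" "(C + 1) * \<delta> = e / 2" using e C by (simp_all add: \<delta>_def field_simps)
  obtain y where y: "y \<in> D" "dist y x < \<delta>" using closure_approachable[of x D] D \<delta>(1) by auto
  have "eventually (\<lambda>j. dist (g j y) y < e / 2) sequentially"
    by (rule tendstoD[OF lim[OF y(1)]]) (use e in simp)
  then show "eventually (\<lambda>j. dist (g j x) x < e) sequentially"
  proof eventually_elim
    case (elim j)
    have "dist (g j x) x \<le> dist (g j x) (g j y) + dist (g j y) y + dist y x"
      using dist_triangle[of "g j x" x "g j y"] dist_triangle[of "g j y" x y] by linarith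
    also have "dist (g j x) (g j y) \<le> C * dist y x"
      using lipschitz_onD[OF g, of x y] by (simp add: dist_commute)
    also have "C * dist y x + dist (g j y) y + dist y x < (C + 1) * \<delta> + e / 2"
      using elim y(2) C mult_left_mono[OF less_imp_le[OF y(2)] C] by (simp add: algebra_simps)
    finally show ?case using \<delta>(2) by simp
  qed
qed

lemma rigid_fhat:
  fixes f :: "'a::metric_space \<Rightarrow> 'a" and D :: "'a set"
  assumes f: "K-lipschitz_on UNIV f" "f z = z" and pw: "\<And>n. C-lipschitz_on UNIV (f ^^ n)"
    and rec: "simultaneously_recurrent f" and D: "countable D" "closure D = UNIV"
  shows "rigid_F z (fhat z f)"
proof -
  obtain r where r: "strict_mono r" "\<And>x. x \<in> D \<Longrightarrow> (\<lambda>j. (f ^^ r j) x) \<longlonglongrightarrow> x"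
    using simultaneously_recurrent_subseq[OF rec D(1)] by blast
  have "(\<lambda>j. (f ^^ r j) x) \<longlonglongrightarrow> x" for x
    by (rule tendsto_id_of_dense[where g = "\<lambda>j. f ^^ r j"]) (use pw D(2) r(2) in auto)
  then have "(\<lambda>j. dnorm z ((fhat z f ^^ r j) \<mu> - \<mu>)) \<longlonglongrightarrow> 0" if m: "\<mu> \<in> FreeSp z" for \<mu>
    using tendsto_dnorm_push_diff[where g = "\<lambda>j. f ^^ r j", OF pw funpow_lipschitz(2)[OF f] _ m]
    by (simp add: fhat_funpow[OF f m])
  then show ?thesis unfolding rigid_F_def using r(1) by blast
qed

section \<open>Simultaneous recurrence of \<open>f\<close> from a nonempty interior of \<open>RT\<close>\<close>

definition sign_generic :: "'b set \<Rightarrow> ('b \<Rightarrow> real) \<Rightarrow> bool" where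
  "sign_generic S c \<longleftrightarrow>
    (\<forall>w. (\<forall>a\<in>S. w a \<in> {-1, 0, 1}) \<longrightarrow> (\<Sum>a\<in>S. w a * c a) = 0 \<longrightarrow> (\<forall>a\<in>S. w a = 0))"

lemma sign_generic_insert:
  assumes S: "finite S" "x \<notin> S" and gen: "sign_generic S c"
    and avoid: "\<And>w. \<forall>a\<in>S. w a \<in> {-1, 0, 1} \<Longrightarrow> \<bar>c x\<bar> \<noteq> \<bar>\<Sum>a\<in>S. w a * c a\<bar>"
  shows "sign_generic (insert x S) c"
  unfolding sign_generic_def
proof (intro allI impI)
  fix w assume w: "\<forall>a\<in>insert x S. w a \<in> {-1, 0, 1}" and sum0: "(\<Sum>a\<in>insert x S. w a * c a) = 0"
  then have eq: "w x * c x = - (\<Sum>a\<in>S. w a * c a)" using S by (simp add: eq_neg_iff_add_eq_0)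
  have "w x = 0"
  proof (rule ccontr)
    assume "w x \<noteq> 0"
    then have "\<bar>w x\<bar> = 1" using w by auto
    then have "\<bar>c x\<bar> = \<bar>\<Sum>a\<in>S. w a * c a\<bar>" using arg_cong[OF eq, of abs] by (simp add: abs_mult)
    moreover have "\<forall>a\<in>S. w a \<in> {-1, 0, 1}" using w by simp
    ultimately show False using avoid by blast
  qed
  moreover have "\<forall>a\<in>S. w a = 0" using gen eq w \<open>w x = 0\<close> unfolding sign_generic_def by simp
  ultimately show "\<forall>a\<in>insert x S. w a = 0" by simp
qed

text \<open>Each new coefficient only has to avoid the finitely many signed subsums of the previous ones.\<close>
lemma sign_generic_perturbation:
  assumes "finite S" "0 < \<theta>"
  shows "\<exists>c'. (\<forall>a. \<bar>c' a - c a\<bar> < \<theta>) \<and> sign_generic S c'"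
  using assms(1)
proof (induction S rule: finite_induct)
  case empty
  show ?case by (rule exI[of _ c]) (use assms(2) in \<open>auto simp: sign_generic_def\<close>)
next
  case (insert x S)
  obtain c1 where c1: "\<forall>a. \<bar>c1 a - c a\<bar> < \<theta>" "sign_generic S c1"
    using insert.IH by blast
  define Bad where "Bad = (\<lambda>w. \<bar>\<Sum>a\<in>S. w a * c1 a\<bar>) ` (PiE S (\<lambda>_. {-1, 0, 1::real}))"
  have "finite (Bad \<union> uminus ` Bad)"
    unfolding Bad_def by (intro finite_UnI finite_imageI finite_PiE insert(1)) auto
  then have "infinite ({c x - \<theta> <..< c x + \<theta>} - (Bad \<union> uminus ` Bad))"
    by (rule Diff_infinite_finite) (use assms(2) in simp)
  then obtain v where v: "v \<in> {c x - \<theta> <..< c x + \<theta>}" "v \<notin> Bad \<union> uminus ` Bad"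
    by (metis Diff_iff finite.emptyI ex_in_conv)
  define c' where "c' = c1(x := v)"
  have "sign_generic (insert x S) c'"
  proof (rule sign_generic_insert[OF insert(1,2)])
    have "(\<Sum>a\<in>S. w a * c' a) = (\<Sum>a\<in>S. w a * c1 a)" for w
      using insert(2) by (intro sum.cong) (auto simp: c'_def)
    then show "sign_generic S c'" using c1(2) unfolding sign_generic_def by simp
    fix w :: "_ \<Rightarrow> real" assume w: "\<forall>a\<in>S. w a \<in> {-1, 0, 1}"
    have r: "restrict w S \<in> PiE S (\<lambda>_. {-1, 0, 1})" using w by auto
    have "(\<Sum>a\<in>S. w a * c' a) = (\<Sum>a\<in>S. restrict w S a * c1 a)"
      using insert(2) by (intro sum.cong) (auto simp: c'_def)
    then have "\<bar>\<Sum>a\<in>S. w a * c' a\<bar> \<in> Bad" unfolding Bad_def by (intro image_eqI[OF _ r]) simp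
    moreover have "\<bar>v\<bar> \<notin> Bad"
    proof
      assume "\<bar>v\<bar> \<in> Bad"
      then have "v \<in> Bad \<union> uminus ` Bad" by (cases "0 \<le> v") (auto intro: image_eqI[of v uminus "-v"])
      then show False using v(2) by blast
    qed
    ultimately show "\<bar>c' x\<bar> \<noteq> \<bar>\<Sum>a\<in>S. w a * c' a\<bar>" by (auto simp: c'_def)
  qed
  moreover have "\<forall>a. \<bar>c' a - c a\<bar> < \<theta>" using c1(1) v(1) by (auto simp: c'_def abs_less_iff)
  ultimately show ?case by blast
qed

lemma sign_generic_margin:
  assumes "finite S" "sign_generic S c"
  shows "\<exists>\<kappa>>0. \<forall>w. (\<forall>a\<in>S. w a \<in> {-1, 0, 1}) \<longrightarrow> (\<exists>a\<in>S. w a \<noteq> 0) \<longrightarrow>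
    \<kappa> \<le> \<bar>\<Sum>a\<in>S. w a * c a\<bar>"
proof -
  define W where "W = {w \<in> PiE S (\<lambda>_. {-1, 0, 1::real}). \<exists>a\<in>S. w a \<noteq> 0}"
  define V where "V = (\<lambda>w. \<bar>\<Sum>a\<in>S. w a * c a\<bar>) ` W"
  have fW: "finite W" unfolding W_def using finite_PiE[OF assms(1), of "\<lambda>_. {-1, 0, 1::real}"] by auto
  have fV: "finite V" unfolding V_def using fW by simp
  have pos: "v > 0" if vV: "v \<in> V" for v
  proof -
    obtain w where w: "w \<in> W" "v = \<bar>\<Sum>a\<in>S. w a * c a\<bar>" using vV unfolding V_def by blast
    have "(\<Sum>a\<in>S. w a * c a) \<noteq> 0"
      using assms(2) w(1) unfolding W_def sign_generic_def by (auto simp: PiE_iff)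
    then show ?thesis using w by simp
  qed
  have inV: "\<bar>\<Sum>a\<in>S. w a * c a\<bar> \<in> V" if "\<forall>a\<in>S. w a \<in> {-1, 0, 1}" "\<exists>a\<in>S. w a \<noteq> 0" for w
  proof -
    have rW: "restrict w S \<in> W" unfolding W_def using that by auto
    have eq: "(\<Sum>a\<in>S. w a * c a) = (\<Sum>a\<in>S. restrict w S a * c a)" by (intro sum.cong) auto
    show ?thesis unfolding V_def by (rule image_eqI[OF _ rW]) (simp only: eq)
  qed
  show ?thesis
  proof (cases "V = {}")
    case True
    then show ?thesis using inV by (intro exI[of _ 1]) auto
  next
    case False
    have "Min V > 0" using pos Min_in[OF fV False] by auto
    then show ?thesis by (rule exI[of _ "Min V", OF conjI]) (use inV fV in auto)
  qed
qed

lemma exists_empty_geometric_shell: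
  fixes \<epsilon> l :: real and u :: "'b \<Rightarrow> real"
  assumes "finite S" "0 \<le> \<epsilon>" "0 \<le> l" "l \<le> 1"
  shows "\<exists>i\<le>card S. \<forall>a\<in>S. u a \<notin> {\<epsilon> * l ^ Suc i ..< \<epsilon> * l ^ i}"
proof (rule ccontr)
  assume "\<not> ?thesis"
  then have "\<forall>i\<in>{..card S}. \<exists>a\<in>S. u a \<in> {\<epsilon> * l ^ Suc i ..< \<epsilon> * l ^ i}" by auto
  then obtain g where g: "\<And>i. i \<le> card S \<Longrightarrow> g i \<in> S \<and> u (g i) \<in> {\<epsilon> * l ^ Suc i ..< \<epsilon> * l ^ i}"
    by (metis atMost_iff)
  have shell_le: "\<epsilon> * l ^ j \<le> \<epsilon> * l ^ Suc i" if "i < j" for i j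
    using that assms by (intro mult_left_mono power_decreasing) auto
  have "inj_on g {..card S}"
  proof (rule inj_onI)
    fix i j assume ij: "i \<in> {..card S}" "j \<in> {..card S}" "g i = g j"
    have "u (g i) \<in> {\<epsilon> * l ^ Suc i ..< \<epsilon> * l ^ i}" using g[of i] ij(1) by auto
    moreover have "u (g i) \<in> {\<epsilon> * l ^ Suc j ..< \<epsilon> * l ^ j}" using g[of j] ij by auto
    ultimately show "i = j"
      using shell_le[of i j] shell_le[of j i] by (cases i j rule: linorder_cases) auto
  qed
  moreover have "g ` {..card S} \<subseteq> S" using g by auto
  ultimately have "card {..card S} \<le> card S" by (rule card_inj_on_le[OF _ _ assms(1)])
  then show False by simp
qed

lemma finite_uniformly_separated:
  fixes P :: "'a::metric_space set"
  assumes "finite P"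
  obtains \<rho> where "0 < \<rho>" "\<And>a b. a \<in> P \<Longrightarrow> b \<in> P \<Longrightarrow> a \<noteq> b \<Longrightarrow> \<rho> \<le> dist a b"
proof -
  have "\<exists>\<rho>>0. \<forall>a\<in>P. \<forall>b\<in>P. a \<noteq> b \<longrightarrow> \<rho> \<le> dist a b"
    using assms
  proof induction
    case empty
    show ?case by (auto intro: exI[of _ 1])
  next
    case (insert x P)
    obtain \<rho> where \<rho>: "0 < \<rho>" "\<forall>a\<in>P. \<forall>b\<in>P. a \<noteq> b \<longrightarrow> \<rho> \<le> dist a b"
      using insert.IH by blast
    obtain \<delta> where \<delta>: "0 < \<delta>" "\<forall>y\<in>P. y \<noteq> x \<longrightarrow> \<delta> \<le> dist x y"
      using finite_set_avoid[OF insert(1)] by blast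
    show ?case
      using \<rho> \<delta> by (intro exI[of _ "min \<rho> \<delta>"]) (auto simp: dist_commute min.coboundedI1 min.coboundedI2)
  qed
  then show ?thesis using that by blast
qed

text \<open>Test \<open>push z g \<nu> - \<nu>\<close> against the tent of height \<open>s\<close> at \<open>x\<close>: if \<open>g x\<close> is far from \<open>x\<close>, the
  value is \<open>s\<close> times a nontrivial signed subsum of the coefficients, up to an error of size \<open>l * s\<close>.\<close>
lemma tent_test_displacement:
  fixes g :: "'a::metric_space \<Rightarrow> 'a"
  assumes g: "K-lipschitz_on UNIV g" "g z = z"
    and S: "finite S" "z \<notin> S" "x \<in> S"
    and margin: "\<And>w. \<forall>a\<in>S. w a \<in> {-1, 0, 1} \<Longrightarrow> \<exists>a\<in>S. w a \<noteq> 0 \<Longrightarrow> \<kappa> \<le> \<bar>\<Sum>a\<in>S. w a * c a\<bar>"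
    and l: "0 \<le> l" "l < 1" "l * (\<Sum>a\<in>S. \<bar>c a\<bar>) \<le> \<kappa> / 2"
    and s: "0 < s" and far: "\<And>a. a \<in> insert z S \<Longrightarrow> a \<noteq> x \<Longrightarrow> s \<le> dist a x"
    and gap: "\<And>a. a \<in> S \<Longrightarrow> dist (g a) x \<notin> {l * s ..< s}"
    and small: "dnorm z (push z g (delta_comb z S c id) - delta_comb z S c id) < s * (\<kappa> / 2)"
  shows "dist (g x) x < l * s"
proof (rule ccontr)
  assume moved: "\<not> dist (g x) x < l * s"
  define \<nu> where "\<nu> = delta_comb z S c id"
  define \<phi> where "\<phi> = (\<lambda>y. max 0 (s - dist y x))"
  define near where "near a \<longleftrightarrow> dist (g a) x < l * s" for a
  define w where "w a = (if near a then 1 else 0) - (if a = x then 1 else (0::real))" for a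
  define E where "E = (\<Sum>a\<in>S. c a * (if near a then dist (g a) x else 0))"
  have ls: "l * s < s" using l(2) s by simp
  have "z \<noteq> x" using S by auto
  then have \<phi>: "\<phi> \<in> Lip0 z" "Lip \<phi> \<le> 1" unfolding \<phi>_def by (intro tent_Lip0 far; simp)+
  have \<phi>_S: "\<phi> a = (if a = x then s else 0)" if "a \<in> S" for a
    using far[of a] that s by (auto simp: \<phi>_def)
  have \<phi>_g: "\<phi> (g a) = (if near a then s - dist (g a) x else 0)" if "a \<in> S" for a
    using gap[OF that] ls by (auto simp: \<phi>_def near_def)
  have "(push z g \<nu> - \<nu>) \<phi> = (\<Sum>a\<in>S. c a * (\<phi> (g a) - \<phi> a))"
    using \<phi>(1) Lip0_comp(1)[OF \<phi>(1) g]
    by (simp add: \<nu>_def push_def delta_comb_apply sum_subtractf right_diff_distrib)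
  also have "\<dots> = (\<Sum>a\<in>S. s * (w a * c a) - c a * (if near a then dist (g a) x else 0))"
    by (rule sum.cong) (auto simp: \<phi>_S \<phi>_g w_def algebra_simps)
  also have "\<dots> = s * (\<Sum>a\<in>S. w a * c a) - E" by (simp add: E_def sum_subtractf sum_distrib_left)
  finally have decomp: "s * (\<Sum>a\<in>S. w a * c a) = (push z g \<nu> - \<nu>) \<phi> + E" by simp
  have "\<bar>E\<bar> \<le> (\<Sum>a\<in>S. \<bar>c a\<bar> * (l * s))"
    unfolding E_def
    using l(1) s by (intro order_trans[OF sum_abs sum_mono]) (auto simp: abs_mult near_def intro: mult_left_mono)
  also have "\<dots> = s * (l * (\<Sum>a\<in>S. \<bar>c a\<bar>))" by (simp add: sum_distrib_left sum_distrib_right mult_ac)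
  also have "\<dots> \<le> s * (\<kappa> / 2)" using l(3) s by (intro mult_left_mono) auto
  finally have E: "\<bar>E\<bar> \<le> s * (\<kappa> / 2)" .
  have L: "push z g \<nu> - \<nu> \<in> LipDual z"
    unfolding \<nu>_def by (rule push_minus_LipDual[OF delta_comb_FreeSp[OF S(1)] g])
  have "\<bar>(push z g \<nu> - \<nu>) \<phi>\<bar> \<le> dnorm z (push z g \<nu> - \<nu>)"
    using LipDual_abs_le[OF L \<phi>(1)] \<phi>(2) dnorm_nonneg[OF L] Lip0_Lip_nonneg[OF \<phi>(1)]
    by (meson mult_left_le order_trans)
  then have test: "\<bar>(push z g \<nu> - \<nu>) \<phi>\<bar> < s * (\<kappa> / 2)" using small \<nu>_def by simp
  have sign: "\<forall>a\<in>S. w a \<in> {-1, 0, 1}" by (auto simp: w_def)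
  have "\<exists>a\<in>S. w a \<noteq> 0" using moved S(3) by (auto simp: w_def near_def)
  then have "\<kappa> \<le> \<bar>\<Sum>a\<in>S. w a * c a\<bar>" by (rule margin[OF sign])
  then have "s * \<kappa> \<le> s * \<bar>\<Sum>a\<in>S. w a * c a\<bar>" using s by simp
  also have "\<dots> = \<bar>s * (\<Sum>a\<in>S. w a * c a)\<bar>" using s by (simp add: abs_mult)
  also have "\<dots> = \<bar>(push z g \<nu> - \<nu>) \<phi> + E\<bar>" by (simp only: decomp)
  also have "\<dots> \<le> \<bar>(push z g \<nu> - \<nu>) \<phi>\<bar> + \<bar>E\<bar>" by (rule abs_triangle_ineq)
  finally show False using test E by linarith
qed

lemma exists_small_ratio:
  fixes M \<kappa> :: real
  assumes "0 \<le> M" "0 < \<kappa>"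
  obtains l where "0 < l" "l < 1" "l * M \<le> \<kappa> / 2"
proof -
  define l where "l = min (1/2) (\<kappa> / (2 * (M + 1)))"
  have "0 < \<kappa> / (2 * (M + 1))" using assms by simp
  then have l: "0 < l" "l < 1" by (auto simp: l_def)
  have "l * M \<le> \<kappa> / (2 * (M + 1)) * M"
    using assms(1) by (intro mult_right_mono) (auto simp: l_def)
  also have "\<dots> \<le> \<kappa> / 2" using assms by (simp add: field_simps)
  finally show ?thesis using l that by blast
qed

lemma sign_generic_recurrent_displacement:
  assumes f: "K-lipschitz_on UNIV f" "f z = z"
    and S: "finite S" "z \<notin> S" and gen: "sign_generic S c"
    and R: "delta_comb z S c id \<in> RT z (fhat z f)" and \<epsilon>: "0 < \<epsilon>"
  shows "\<exists>n\<ge>N. \<forall>x\<in>S. dist ((f ^^ n) x) x < \<epsilon>"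
proof -
  obtain \<kappa> where \<kappa>: "0 < \<kappa>" and margin: "\<And>w. \<forall>a\<in>S. w a \<in> {-1, 0, 1} \<Longrightarrow> \<exists>a\<in>S. w a \<noteq> 0 \<Longrightarrow>
      \<kappa> \<le> \<bar>\<Sum>a\<in>S. w a * c a\<bar>"
    using sign_generic_margin[OF S(1) gen] by auto
  obtain \<rho> where \<rho>: "0 < \<rho>" and sep: "\<And>a b. a \<in> insert z S \<Longrightarrow> b \<in> insert z S \<Longrightarrow> a \<noteq> b \<Longrightarrow>
      \<rho> \<le> dist a b"
    using finite_uniformly_separated[of "insert z S"] S(1) by blast
  have "0 \<le> (\<Sum>a\<in>S. \<bar>c a\<bar>)" by (auto intro: sum_nonneg)
  then obtain l where l: "0 < l" "l < 1" "l * (\<Sum>a\<in>S. \<bar>c a\<bar>) \<le> \<kappa> / 2"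
    using exists_small_ratio[OF _ \<kappa>] by blast
  define \<epsilon>0 where "\<epsilon>0 = min \<epsilon> \<rho>"
  have \<epsilon>0: "0 < \<epsilon>0" "\<epsilon>0 \<le> \<epsilon>" "\<epsilon>0 \<le> \<rho>" using \<epsilon> \<rho> by (auto simp: \<epsilon>0_def)
  \<comment> \<open>Pigeonhole gives an empty shell among the first \<open>card S + 1\<close> ones around each point, so
    \<open>\<epsilon>0 * l ^ card S\<close> bounds all radii used below from below.\<close>
  have "0 < \<epsilon>0 * l ^ card S * (\<kappa> / 2)" using \<epsilon>0 l \<kappa> by simp
  then obtain n where n: "n \<ge> N"
    "dnorm z (push z (f ^^ n) (delta_comb z S c id) - delta_comb z S c id) < \<epsilon>0 * l ^ card S * (\<kappa> / 2)"
    using R unfolding RT_fhat_iff[OF f delta_comb_FreeSp[OF S(1)]] by blast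
  have "dist ((f ^^ n) x) x < \<epsilon>" if x: "x \<in> S" for x
  proof -
    obtain i where i: "i \<le> card S" "\<forall>a\<in>S. dist ((f ^^ n) a) x \<notin> {\<epsilon>0 * l ^ Suc i ..< \<epsilon>0 * l ^ i}"
      using exists_empty_geometric_shell[OF S(1), of \<epsilon>0 l "\<lambda>a. dist ((f ^^ n) a) x"] \<epsilon>0 l by auto
    define s where "s = \<epsilon>0 * l ^ i"
    have s: "0 < s" "s \<le> \<epsilon>0" using \<epsilon>0 l by (auto simp: s_def power_le_one mult_left_le)
    have "\<epsilon>0 * l ^ card S \<le> s" unfolding s_def using \<epsilon>0 l i(1) by (intro mult_left_mono power_decreasing) auto
    then have small: "dnorm z (push z (f ^^ n) (delta_comb z S c id) - delta_comb z S c id) < s * (\<kappa> / 2)"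
      using n(2) \<kappa> by (meson less_le_trans mult_right_mono half_gt_zero less_imp_le)
    have far: "s \<le> dist a x" if "a \<in> insert z S" "a \<noteq> x" for a
      using sep[OF that(1) _ that(2)] x s(2) \<epsilon>0(3) by auto
    have gap: "dist ((f ^^ n) a) x \<notin> {l * s ..< s}" if "a \<in> S" for a
      using i(2) that by (simp add: s_def mult.left_commute)
    have "dist ((f ^^ n) x) x < l * s"
      by (rule tent_test_displacement[OF funpow_lipschitz[OF f] S x margin less_imp_le[OF l(1)] l(2,3)
            s(1) far gap small])
    also have "\<dots> \<le> s" using l s by (simp add: mult_left_le_one_le)
    finally show ?thesis using s(2) \<epsilon>0(2) by linarith
  qed
  then show ?thesis using n(1) by blast
qed

lemma exists_sign_generic_recurrent:
  assumes int: "F_interior z (RT z (fhat z f)) \<noteq> {}" and A: "finite A"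
  obtains S c where "finite S" "z \<notin> S" "A - {z} \<subseteq> S" "sign_generic S c"
    "delta_comb z S c id \<in> RT z (fhat z f)"
proof -
  obtain \<mu> where "\<mu> \<in> F_interior z (RT z (fhat z f))" using int by blast
  then obtain r where \<mu>: "\<mu> \<in> FreeSp z" and r: "0 < r"
    and ball: "\<And>\<nu>. \<nu> \<in> FreeSp z \<Longrightarrow> dnorm z (\<nu> - \<mu>) < r \<Longrightarrow> \<nu> \<in> RT z (fhat z f)"
    unfolding F_interior_def by blast
  obtain A0 c0 where A0: "finite A0" "dnorm z (\<mu> - delta_comb z A0 c0 id) < r / 2"
    using FreeSp_approx[OF \<mu> half_gt_zero[OF r]] by blast
  define S where "S = (A0 \<union> A) - {z}"
  have S: "finite S" "z \<notin> S" "A - {z} \<subseteq> S" "A0 - {z} \<subseteq> S" using A0(1) A by (auto simp: S_def)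
  define c where "c a = (if a \<in> A0 then c0 a else 0)" for a
  have c: "delta_comb z A0 c0 id = delta_comb z S c id"
    unfolding c_def by (rule delta_comb_remove_base_point[OF A0(1) S(1) S(4) S(2)])
  define D where "D = (\<Sum>a\<in>S. dist a z)"
  have D: "0 \<le> D" unfolding D_def by (auto intro: sum_nonneg)
  have "0 < r / 2 / (D + 1)" using r D by simp
  then obtain c' where c': "\<forall>a. \<bar>c' a - c a\<bar> < r / 2 / (D + 1)" "sign_generic S c'"
    using sign_generic_perturbation[OF S(1)] by blast
  have "dnorm z (delta_comb z S c' id - delta_comb z S c id) \<le> r / 2 / (D + 1) * (\<Sum>a\<in>S. dist a z)"
    using c'(1) by (intro dnorm_delta_comb_coeff_diff[OF S(1)]) (auto intro: less_imp_le)
  also have "\<dots> = r / 2 / (D + 1) * D" by (simp only: D_def)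
  also have "\<dots> < r / 2"
    using mult_divide_plus_one_less[OF D half_gt_zero[OF r]] by (metis mult.commute)
  finally have c'_close: "dnorm z (delta_comb z S c' id - delta_comb z S c id) < r / 2" .
  have "delta_comb z S c' id - \<mu>
      = (delta_comb z S c' id - delta_comb z S c id) - (\<mu> - delta_comb z S c id)"
    by (simp add: fun_eq_iff)
  then have "dnorm z (delta_comb z S c' id - \<mu>)
      \<le> dnorm z (delta_comb z S c' id - delta_comb z S c id) + dnorm z (\<mu> - delta_comb z S c id)"
    using LipDual_diff(2)[OF LipDual_diff(1) LipDual_diff(1), OF delta_comb_LipDual(1)[OF S(1)]
        delta_comb_LipDual(1)[OF S(1)] FreeSp_LipDual[OF \<mu>] delta_comb_LipDual(1)[OF S(1)]]
    by (simp only:)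
  then have "dnorm z (delta_comb z S c' id - \<mu>) < r"
    using c'_close A0(2) unfolding c by linarith
  then have "delta_comb z S c' id \<in> RT z (fhat z f)" using ball delta_comb_FreeSp[OF S(1)] by blast
  then show ?thesis using that S(1-3) c'(2) by blast
qed

lemma simultaneously_recurrent_of_interior:
  assumes f: "K-lipschitz_on UNIV f" "f z = z" and int: "F_interior z (RT z (fhat z f)) \<noteq> {}"
  shows "simultaneously_recurrent f"
  unfolding simultaneously_recurrent_def
proof (intro allI impI)
  fix A :: "'a set" and \<epsilon> :: real and N :: nat
  assume A: "finite A" and \<epsilon>: "0 < \<epsilon>"
  obtain S c where S: "finite S" "z \<notin> S" "A - {z} \<subseteq> S" and gen: "sign_generic S c"
    and R: "delta_comb z S c id \<in> RT z (fhat z f)"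
    using exists_sign_generic_recurrent[OF int A] by blast
  obtain n where n: "n \<ge> N" "\<forall>x\<in>S. dist ((f ^^ n) x) x < \<epsilon>"
    using sign_generic_recurrent_displacement[OF f S(1,2) gen R \<epsilon>] by blast
  have "\<forall>x\<in>A. dist ((f ^^ n) x) x < \<epsilon>"
    using n(2) S(3) \<epsilon> funpow_lipschitz(2)[OF f, of n] by auto
  then show "\<exists>n\<ge>N. \<forall>x\<in>A. dist ((f ^^ n) x) x < \<epsilon>" using n(1) by blast
qed

theorem corollary3p8:
  fixes z :: "'a::metric_space" and f :: "'a \<Rightarrow> 'a"
  assumes "complete (UNIV :: 'a set)"
    and "f \<in> LipMaps0 z"
    and "F_interior z (RT z (fhat z f)) \<noteq> {}"
    and "\<exists>C>0. \<forall>n. Lip (f ^^ n) \<le> C"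
  shows "RT z (fhat z f) = FreeSp z \<and>
         ((\<exists>D::'a set. countable D \<and> closure D = UNIV) \<longrightarrow> rigid_F z (fhat z f))"
proof -
  obtain K where f: "K-lipschitz_on UNIV f" "f z = z" using assms(2) unfolding LipMaps0_def by blast
  obtain C where C: "\<And>n. Lip (f ^^ n) \<le> C" using assms(4) by blast
  have pw: "C-lipschitz_on UNIV (f ^^ n)" for n
    using lipschitz_on_le[OF lipschitz_on_Lip[OF funpow_lipschitz(1)[OF f]] C] .
  have rec: "simultaneously_recurrent f"
    by (rule simultaneously_recurrent_of_interior[OF f assms(3)])
  show ?thesis
    using RT_fhat_eq_FreeSp[OF f pw rec] rigid_fhat[OF f pw rec] by blast
qed

end
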